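(* Let $\alpha=(\alpha_1,\dots,\alpha_n)\in\mathbb{R}^n$ with $\alpha_1,\dots,\alpha_n,1$ linearly independent over $\mathbb{Q}$, $\ell=n+1$. If $L_\alpha$ is badly approximable, then there are constants $c,C>0$ depending only on $\alpha$ such that for every $m\in\mathbb{Z}^+$, the numbers $\beta_1,\dots,\beta_\ell$ defined by $A_m(\alpha_1,\dots,\alpha_n,1)^\top=(\beta_1,\dots,\beta_\ell)^\top$ satisfy $$c\,m^{-n}<|\beta_1|<\cdots<|\beta_\ell|<C\,m^{-n}.$$
   Context: $L_\alpha(x)=\alpha_1x_1+\cdots+\alpha_nx_n$; $\|t\|$ is the distance from $t\in\mathbb{R}$ to the nearest integer; $\|\cdot\|_\infty$ is the maximum absolute value of entries. $L_\alpha$ is badly approximable if there is $c>0$ with $\|L_\alpha(q)\|\ge c\|q\|_\infty^{-n}$ for all nonzero $q\in\mathbb{Z}^n$. For $r=(r_1,\dots,r_\ell)\in\mathbb{Z}^\ell$, $\xi(r)=r_1\alpha_1+\cdots+r_n\alpha_n+r_\ell$. $A_m$ (Minkowski's algorithm) is the nonsingular integral $\ell\times\ell$ matrix with rows $w_1,\dots,w_\ell$ chosen successively: $w_i$ is the vector $w\in\mathbb{Z}^\ell$ with $\|w\|_\infty\le m$, linearly independent of $w_1,\dots,w_{i-1}$, minimizing $|\xi(w)|$, normalized so that its first nonzero entry is positive; $\beta_i=\xi(w_i)$. *)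

theory Defs
  imports Complex_Main
begin

(* Conventions: alpha :: nat => real, alpha_1..alpha_n are alpha 0 .. alpha (n-1).
   Integer vectors in Z^l (l = n+1) are functions nat => int, entries 0..n;
   entry n plays the role of r_l (the coefficient of 1). *)

definition dist_int :: "real \<Rightarrow> real" where
  "dist_int t = \<bar>t - of_int (round t)\<bar>"

definition L_form :: "nat \<Rightarrow> (nat \<Rightarrow> real) \<Rightarrow> (nat \<Rightarrow> int) \<Rightarrow> real" where
  "L_form n \<alpha> q = (\<Sum>j<n. of_int (q j) * \<alpha> j)"

definition sup_norm :: "nat \<Rightarrow> (nat \<Rightarrow> int) \<Rightarrow> int" where
  "sup_norm k q = Max ({\<bar>q j\<bar> | j. j < k} \<union> {0})"

definition Q_lin_indep_with_1 :: "nat \<Rightarrow> (nat \<Rightarrow> real) \<Rightarrow> bool" where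
  "Q_lin_indep_with_1 n \<alpha> \<longleftrightarrow>
     (\<forall>c :: nat \<Rightarrow> rat.
        (\<Sum>j<n. of_rat (c j) * \<alpha> j) + of_rat (c n) = 0 \<longrightarrow> (\<forall>j\<le>n. c j = 0))"

definition badly_approximable :: "nat \<Rightarrow> (nat \<Rightarrow> real) \<Rightarrow> bool" where
  "badly_approximable n \<alpha> \<longleftrightarrow>
     (\<exists>c>0. \<forall>q :: nat \<Rightarrow> int. (\<exists>j<n. q j \<noteq> 0) \<longrightarrow>
        dist_int (L_form n \<alpha> q) \<ge> c * (real_of_int (sup_norm n q)) powr (- real n))"

definition xi :: "nat \<Rightarrow> (nat \<Rightarrow> real) \<Rightarrow> (nat \<Rightarrow> int) \<Rightarrow> real" where
  "xi n \<alpha> r = (\<Sum>j<n. of_int (r j) * \<alpha> j) + of_int (r n)"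

definition int_vecs_indep :: "nat \<Rightarrow> nat \<Rightarrow> (nat \<Rightarrow> nat \<Rightarrow> int) \<Rightarrow> bool" where
  "int_vecs_indep l k v \<longleftrightarrow>
     (\<forall>c :: nat \<Rightarrow> rat.
        (\<forall>j<l. (\<Sum>i<k. c i * of_int (v i j)) = 0) \<longrightarrow> (\<forall>i<k. c i = 0))"

(* w 0, ..., w (n) are the rows of A_m produced by Minkowski's algorithm
   (dimension l = n+1): row i has sup norm <= m, is linearly independent of
   the previous rows, minimizes |xi| among such vectors, and its first
   nonzero entry is positive. *)
definition minkowski_rows :: "nat \<Rightarrow> (nat \<Rightarrow> real) \<Rightarrow> nat \<Rightarrow> (nat \<Rightarrow> nat \<Rightarrow> int) \<Rightarrow> bool" where
  "minkowski_rows n \<alpha> m w \<longleftrightarrow>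
     (\<forall>i < Suc n.
        (\<forall>j < Suc n. \<bar>w i j\<bar> \<le> int m) \<and>
        int_vecs_indep (Suc n) (Suc i) w \<and>
        (\<exists>j < Suc n. w i j > 0 \<and> (\<forall>j' < j. w i j' = 0)) \<and>
        (\<forall>u :: nat \<Rightarrow> int.
           (\<forall>j < Suc n. \<bar>u j\<bar> \<le> int m) \<and> int_vecs_indep (Suc n) (Suc i) (w(i := u))
           \<longrightarrow> \<bar>xi n \<alpha> (w i)\<bar> \<le> \<bar>xi n \<alpha> u\<bar>))"

end

theory Submission
  imports Defs "HOL-Library.FuncSet"
begin

text \<open>The lower bound is bad approximability applied to the first row, whose entries are at
  most \<open>m\<close>. The strict increase holds because \<open>\<bar>\<xi>(w\<^sub>i)\<bar> = \<bar>\<xi>(w\<^sub>i\<^sub>+\<^sub>1)\<bar>\<close> would force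
  \<open>w\<^sub>i = \<plusminus>w\<^sub>i\<^sub>+\<^sub>1\<close>, as \<open>\<alpha>\<^sub>1, \<dots>, \<alpha>\<^sub>n, 1\<close> are linearly independent over \<open>\<rat>\<close>.
  For the upper bound take a real linear functional \<open>a \<noteq> 0\<close> vanishing on the first \<open>n\<close> rows;
  by the minimality of the last row it suffices to find \<open>u\<close> with \<open>\<parallel>u\<parallel>\<^sub>\<infinity> \<le> m\<close>, \<open>a \<cdot> u \<noteq> 0\<close> and
  \<open>\<bar>\<xi>(u)\<bar> \<le> C m\<^sup>-\<^sup>n\<close>. Such a \<open>u\<close> comes from Dirichlet's box principle with the coordinate of the
  largest coefficient of \<open>a\<close> left uncut: if the resulting vector lay on the hyperplane \<open>a \<cdot> y = 0\<close>,
  that coordinate would be controlled by the others, and \<open>y\<close> would be short in every coordinate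
  while \<open>\<xi>(y)\<close> is very small, which bad approximability forbids.\<close>

section \<open>Linear algebra of integer vectors\<close>

lemma exists_nonzero_orthogonal:
  fixes v :: "'i \<Rightarrow> nat \<Rightarrow> real"
  assumes "finite I" "card I < d"
  shows "\<exists>a. (\<exists>j<d. a j \<noteq> 0) \<and> (\<forall>i\<in>I. (\<Sum>j<d. a j * v i j) = 0)"
  using assms
proof (induction d arbitrary: I v)
  case 0
  then show ?case by simp
next
  case (Suc d)
  show ?case
  proof (cases "\<forall>i\<in>I. v i d = 0")
    case True
    then show ?thesis
      by (intro exI[of _ "\<lambda>j. if j = d then 1 else 0"]) auto
  next
    case False
    then obtain i0 where i0: "i0 \<in> I" "v i0 d \<noteq> 0" by blast
    \<comment> \<open>Gaussian elimination: clear the last coordinate of all other rows using row \<open>i0\<close>.\<close>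
    define v' where "v' = (\<lambda>i j. v i j - (v i d / v i0 d) * v i0 j)"
    have "card (I - {i0}) < d"
      using Suc.prems i0 card_gt_0_iff[of I] by (auto simp: card_Diff_singleton)
    then obtain a' where a': "\<exists>j<d. a' j \<noteq> 0" "\<forall>i\<in>I - {i0}. (\<Sum>j<d. a' j * v' i j) = 0"
      using Suc.IH[of "I - {i0}" v'] Suc.prems by blast
    define a where "a = (\<lambda>j. if j < d then a' j
                             else if j = d then - (\<Sum>j<d. a' j * v i0 j) / v i0 d else 0)"
    have row_i0: "(\<Sum>j<Suc d. a j * v i0 j) = 0"
      using i0 by (simp add: a_def)
    have "(\<Sum>j<Suc d. a j * v i j) = 0" if "i \<in> I" for i
    proof (cases "i = i0")
      case True
      then show ?thesis using row_i0 by simp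
    next
      case False
      have "(\<Sum>j<Suc d. a j * v i j)
          = (\<Sum>j<Suc d. a j * v' i j) + (v i d / v i0 d) * (\<Sum>j<Suc d. a j * v i0 j)"
        by (simp add: v'_def algebra_simps sum.distrib sum_distrib_left sum_subtractf)
      also have "(\<Sum>j<Suc d. a j * v' i j) = 0"
        using a'(2) that False i0 by (simp add: a_def v'_def)
      finally show ?thesis using row_i0 by simp
    qed
    moreover have "\<exists>j<Suc d. a j \<noteq> 0"
      using a'(1) by (auto simp: a_def)
    ultimately show ?thesis by blast
  qed
qed

lemma abs_le_of_max_coefficient:
  fixes g x :: "'a \<Rightarrow> real"
  assumes "finite I" "j0 \<in> I" "\<forall>j\<in>I. \<bar>g j\<bar> \<le> \<bar>g j0\<bar>" "g j0 \<noteq> 0"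
    and "(\<Sum>j\<in>I. g j * x j) = 0" "\<forall>j\<in>I - {j0}. \<bar>x j\<bar> \<le> \<epsilon>"
  shows "\<bar>x j0\<bar> \<le> real (card I - 1) * \<epsilon>"
proof -
  have "(\<Sum>j\<in>I. g j * x j) = g j0 * x j0 + (\<Sum>j\<in>I - {j0}. g j * x j)"
    using assms(1,2) by (rule sum.remove)
  then have "\<bar>g j0\<bar> * \<bar>x j0\<bar> = \<bar>\<Sum>j\<in>I - {j0}. g j * x j\<bar>"
    using assms(5) by (simp add: abs_mult[symmetric] eq_neg_iff_add_eq_0[symmetric])
  also have "\<dots> \<le> (\<Sum>j\<in>I - {j0}. \<bar>g j0\<bar> * \<epsilon>)"
    using assms(3,6) by (intro sum_abs[THEN order_trans] sum_mono) (simp add: abs_mult mult_mono')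
  also have "\<dots> = \<bar>g j0\<bar> * (real (card I - 1) * \<epsilon>)"
    using assms(1,2) by (simp add: card_Diff_singleton)
  finally show ?thesis
    using assms(4) by simp
qed

lemma int_vecs_indep_extend:
  fixes a :: "nat \<Rightarrow> real"
  assumes indep: "int_vecs_indep l k w"
    and orth: "\<forall>i<k. (\<Sum>j<l. a j * of_int (w i j)) = 0"
    and not_orth: "(\<Sum>j<l. a j * of_int (u j)) \<noteq> 0"
  shows "int_vecs_indep l (Suc k) (w(k := u))"
  unfolding int_vecs_indep_def
proof (intro allI impI)
  fix c :: "nat \<Rightarrow> rat" and i
  let ?w = "w(k := u)"
  assume rel: "\<forall>j<l. (\<Sum>i<Suc k. c i * of_int (?w i j)) = 0" and "i < Suc k"
  have rel_real: "(\<Sum>i<Suc k. of_rat (c i) * (of_int (?w i j) :: real)) = 0" if "j < l" for j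
    using arg_cong[OF rel[rule_format, OF that], of "of_rat :: rat \<Rightarrow> real"]
    by (simp only: of_rat_sum of_rat_mult of_rat_of_int_eq of_rat_0)
  \<comment> \<open>Pair the relation with \<open>a\<close>: all rows but the new one are orthogonal to \<open>a\<close>.\<close>
  have "0 = (\<Sum>j<l. a j * (\<Sum>i<Suc k. of_rat (c i) * (of_int (?w i j) :: real)))"
    using rel_real by simp
  also have "\<dots> = (\<Sum>i<Suc k. of_rat (c i) * (\<Sum>j<l. a j * of_int (?w i j)))"
    by (simp only: sum_distrib_left mult.left_commute sum.swap[of _ "{..<Suc k}"])
  also have "\<dots> = of_rat (c k) * (\<Sum>j<l. a j * of_int (u j))"
    using orth by simp
  finally have "c k = 0" using not_orth by simp
  with rel have "\<forall>j<l. (\<Sum>i<k. c i * of_int (w i j)) = 0" by simp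
  with indep have "\<forall>i<k. c i = 0" unfolding int_vecs_indep_def by blast
  with \<open>c k = 0\<close> \<open>i < Suc k\<close> show "c i = 0" using less_Suc_eq by auto
qed

lemma int_vecs_indep_replace_by_next:
  assumes "int_vecs_indep l (Suc (Suc i)) w"
  shows "int_vecs_indep l (Suc i) (w(i := w (Suc i)))"
  unfolding int_vecs_indep_def
proof (intro allI impI)
  fix c :: "nat \<Rightarrow> rat" and i'
  assume rel: "\<forall>j<l. (\<Sum>i'<Suc i. c i' * of_int ((w(i := w (Suc i))) i' j)) = 0" and "i' < Suc i"
  define c' where "c' = (\<lambda>k. if k < i then c k else if k = Suc i then c i else 0)"
  have "\<forall>j<l. (\<Sum>k<Suc (Suc i). c' k * of_int (w k j)) = 0"
    using rel by (simp add: c'_def)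
  then have "\<forall>k<Suc (Suc i). c' k = 0"
    using assms unfolding int_vecs_indep_def by blast
  then show "c i' = 0"
    using \<open>i' < Suc i\<close> by (cases "i' = i") (auto simp: c'_def dest: spec[of _ i'] spec[of _ "Suc i"])
qed

lemma int_vecs_indep_not_proportional:
  assumes "int_vecs_indep l k w" "i < k" "i' < k" "i \<noteq> i'"
  shows "\<not> (\<forall>j<l. w i j = s * w i' j)"
proof
  assume proportional: "\<forall>j<l. w i j = s * w i' j"
  define c :: "nat \<Rightarrow> rat" where "c = (\<lambda>x. if x = i then 1 else if x = i' then - of_int s else 0)"
  have "(\<Sum>x<k. c x * of_int (w x j)) = of_int (w i j) - of_int s * of_int (w i' j)" for j
  proof -
    have "(\<Sum>x<k. c x * of_int (w x j))
        = (\<Sum>x<k. (if x = i then of_int (w i j) else 0) + (if x = i' then - of_int s * of_int (w i' j) else 0))"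
      using \<open>i \<noteq> i'\<close> by (intro sum.cong) (auto simp: c_def)
    also have "\<dots> = of_int (w i j) - of_int s * of_int (w i' j)"
      using assms(2,3) by (simp add: sum.distrib)
    finally show ?thesis .
  qed
  with proportional have "\<forall>j<l. (\<Sum>x<k. c x * of_int (w x j)) = 0" by simp
  then have "c i = 0"
    using assms(1,2) unfolding int_vecs_indep_def by blast
  then show False by (simp add: c_def)
qed

section \<open>The linear form and bad approximability\<close>

lemma dist_int_le_abs_diff: "dist_int t \<le> \<bar>t - of_int z\<bar>"
proof (cases "z = round t")
  case False
  then have "1 \<le> \<bar>z - round t\<bar>" by linarith
  then have "1 \<le> \<bar>real_of_int z - of_int (round t)\<bar>"
    by (metis of_int_1_le_iff of_int_abs of_int_diff)
  then show ?thesis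
    using of_int_round_abs_le[of t] unfolding dist_int_def by linarith
qed (simp add: dist_int_def)

lemma abs_le_sup_norm: "j < n \<Longrightarrow> \<bar>q j\<bar> \<le> sup_norm n q"
  unfolding sup_norm_def by (rule Max_ge) auto

lemma sup_norm_le:
  assumes "\<forall>j<n. real_of_int \<bar>q j\<bar> \<le> B" "B \<ge> 0"
  shows "real_of_int (sup_norm n q) \<le> B"
proof -
  have "sup_norm n q \<in> {\<bar>q j\<bar> | j. j < n} \<union> {0}"
    unfolding sup_norm_def by (rule Max_in) auto
  then show ?thesis using assms by auto
qed

lemma xi_eq_L_form_plus: "xi n \<alpha> r = L_form n \<alpha> r + of_int (r n)"
  by (simp add: xi_def L_form_def)

lemma dist_int_L_form_le_xi: "dist_int (L_form n \<alpha> r) \<le> \<bar>xi n \<alpha> r\<bar>"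
  using dist_int_le_abs_diff[of "L_form n \<alpha> r" "- r n"] by (simp add: xi_eq_L_form_plus)

lemma abs_L_form_le:
  assumes "\<forall>j<n. \<bar>y j\<bar> \<le> int Q"
  shows "\<bar>L_form n \<alpha> y\<bar> \<le> real Q * (\<Sum>j<n. \<bar>\<alpha> j\<bar>)"
proof -
  have "\<bar>L_form n \<alpha> y\<bar> \<le> (\<Sum>j<n. \<bar>of_int (y j) * \<alpha> j\<bar>)"
    unfolding L_form_def by (rule sum_abs)
  also have "\<dots> \<le> (\<Sum>j<n. real Q * \<bar>\<alpha> j\<bar>)"
  proof (intro sum_mono)
    fix j assume "j \<in> {..<n}"
    then have "\<bar>real_of_int (y j)\<bar> \<le> real Q"
      using assms by (metis lessThan_iff of_int_abs of_int_le_iff of_int_of_nat_eq)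
    then show "\<bar>of_int (y j) * \<alpha> j\<bar> \<le> real Q * \<bar>\<alpha> j\<bar>"
      by (simp add: abs_mult mult_right_mono)
  qed
  finally show ?thesis by (simp add: sum_distrib_left)
qed

lemma xi_diff_scaled: "xi n \<alpha> (\<lambda>j. r j - k * r' j) = xi n \<alpha> r - of_int k * xi n \<alpha> r'"
  by (simp add: xi_def algebra_simps sum_subtractf sum_distrib_left)

lemma Q_lin_indep_xi_eq_0D:
  assumes "Q_lin_indep_with_1 n \<alpha>" "xi n \<alpha> r = 0" "j \<le> n"
  shows "r j = 0"
proof -
  have "(\<Sum>j<n. of_rat (of_int (r j)) * \<alpha> j) + of_rat (of_int (r n)) = 0"
    using assms(2) by (simp add: xi_def)
  then have "(of_int (r j) :: rat) = 0"
    using assms(1,3) unfolding Q_lin_indep_with_1_def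
    by (elim allE[of _ "\<lambda>j. of_int (r j)"]) blast
  then show ?thesis by simp
qed

lemma less_mult_powr_neg_iff:
  assumes "m \<ge> 1"
  shows "x < C * real m powr (- real n) \<longleftrightarrow> x * real m ^ n < C"
  using assms by (simp add: powr_minus powr_realpow pos_less_divide_eq flip: divide_inverse)

definition badly_approximable_with :: "nat \<Rightarrow> (nat \<Rightarrow> real) \<Rightarrow> real \<Rightarrow> bool" where
  "badly_approximable_with n \<alpha> c \<longleftrightarrow>
     (\<forall>q :: nat \<Rightarrow> int. (\<exists>j<n. q j \<noteq> 0) \<longrightarrow>
        dist_int (L_form n \<alpha> q) \<ge> c * (real_of_int (sup_norm n q)) powr (- real n))"

lemma badly_approximable_iff: "badly_approximable n \<alpha> \<longleftrightarrow> (\<exists>c>0. badly_approximable_with n \<alpha> c)"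
  unfolding badly_approximable_def badly_approximable_with_def ..

lemma badly_approximable_with_xi_ge:
  assumes "badly_approximable_with n \<alpha> c" "c \<ge> 0"
    and "\<exists>j<n. q j \<noteq> 0" "\<forall>j<n. real_of_int \<bar>q j\<bar> \<le> B"
  shows "c / B ^ n \<le> \<bar>xi n \<alpha> q\<bar>"
proof -
  obtain j where j: "j < n" "q j \<noteq> 0" using assms(3) by blast
  define s where "s = real_of_int (sup_norm n q)"
  have "1 \<le> \<bar>q j\<bar>" using j(2) by linarith
  then have "1 \<le> s" using abs_le_sup_norm[OF j(1), of q] unfolding s_def by linarith
  moreover have "s \<le> B" using sup_norm_le[OF assms(4)] assms(4) j(1) unfolding s_def by force
  ultimately have "c / B ^ n \<le> c / s ^ n"
    using assms(2) by (intro divide_left_mono power_mono mult_pos_pos) auto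
  also have "\<dots> = c * s powr (- real n)"
    using \<open>1 \<le> s\<close> by (simp add: powr_minus powr_realpow divide_inverse)
  also have "\<dots> \<le> \<bar>xi n \<alpha> q\<bar>"
    using assms(1,3) dist_int_L_form_le_xi[of n \<alpha> q] unfolding badly_approximable_with_def s_def
    by force
  finally show ?thesis .
qed

lemma badly_approximable_with_xi_lower_bound:
  assumes "badly_approximable_with n \<alpha> c" "c > 0" "m \<ge> 1"
    and "\<exists>j<Suc n. r j \<noteq> 0" "\<forall>j<Suc n. \<bar>r j\<bar> \<le> int m"
  shows "min c 1 / 2 * real m powr (- real n) < \<bar>xi n \<alpha> r\<bar>"
proof -
  have "min c 1 / 2 * real m powr (- real n) < min c 1 * inverse (real m ^ n)"
    using assms(2,3) by (simp add: powr_minus powr_realpow)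
  also have "\<dots> \<le> \<bar>xi n \<alpha> r\<bar>"
  proof (cases "\<exists>j<n. r j \<noteq> 0")
    case True
    have "\<forall>j<n. real_of_int \<bar>r j\<bar> \<le> real m"
      using assms(5) by (metis less_SucI of_int_le_iff of_int_of_nat_eq)
    then have "c / real m ^ n \<le> \<bar>xi n \<alpha> r\<bar>"
      using badly_approximable_with_xi_ge[OF assms(1)] assms(2) True by (simp add: less_imp_le)
    then show ?thesis by (simp add: divide_inverse mult_right_mono order_trans[rotated])
  next
    case False
    with assms(4) have "r n \<noteq> 0" using less_Suc_eq by blast
    moreover have "xi n \<alpha> r = of_int (r n)" using False by (simp add: xi_def)
    moreover have "min c 1 * inverse (real m ^ n) \<le> 1"
      using assms(2,3) by (intro mult_le_one) (auto simp: inverse_le_1_iff)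
    ultimately show ?thesis by linarith
  qed
  finally show ?thesis .
qed

section \<open>Small values of the linear form off a hyperplane\<close>

lemma unit_cube_pigeonhole:
  fixes p :: "'a \<Rightarrow> nat \<Rightarrow> real" and K :: "nat \<Rightarrow> nat"
  assumes "finite D" "\<forall>d\<in>D. \<forall>j<l. 0 \<le> p d j \<and> p d j < 1"
    and "\<forall>j<l. K j \<ge> 1" "(\<Prod>j<l. K j) < card D"
  obtains d d' where "d \<in> D" "d' \<in> D" "d \<noteq> d'" "\<forall>j<l. real (K j) * \<bar>p d j - p d' j\<bar> < 1"
proof -
  define box where "box = (\<lambda>d. restrict (\<lambda>j. \<lfloor>real (K j) * p d j\<rfloor>) {..<l})"
  have "box ` D \<subseteq> PiE {..<l} (\<lambda>j. {0..<int (K j)})"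
  proof -
    have "\<lfloor>real (K j) * p d j\<rfloor> \<in> {0..<int (K j)}" if "d \<in> D" "j < l" for d j
      using assms(2,3) that mult_strict_left_mono[of "p d j" 1 "real (K j)"] by (auto simp: floor_less_iff)
    then show ?thesis unfolding box_def by (intro image_subsetI) (simp add: restrict_PiE_iff)
  qed
  then have "card (box ` D) \<le> card (PiE {..<l} (\<lambda>j. {0..<int (K j)}))"
    by (intro card_mono) (simp_all add: finite_PiE)
  also have "\<dots> = (\<Prod>j<l. K j)"
    by (simp add: card_PiE)
  finally have "card (box ` D) < card D"
    using assms(4) by linarith
  then have "\<not> inj_on box D"
    using card_image[of box D] by linarith
  then obtain d d' where dd: "d \<in> D" "d' \<in> D" "d \<noteq> d'" "box d = box d'"
    unfolding inj_on_def by blast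
  have "real (K j) * \<bar>p d j - p d' j\<bar> < 1" if "j < l" for j
  proof -
    have "\<lfloor>real (K j) * p d j\<rfloor> = \<lfloor>real (K j) * p d' j\<rfloor>"
      using fun_cong[OF dd(4), of j] that by (simp add: box_def)
    then have "\<bar>real (K j) * p d j - real (K j) * p d' j\<bar> < 1"
      using floor_correct[of "real (K j) * p d j"] floor_correct[of "real (K j) * p d' j"] by linarith
    then show ?thesis by (simp add: abs_mult flip: right_diff_distrib)
  qed
  with dd show thesis using that by blast
qed

text \<open>Box principle for the points \<open>(q/(Q+1), {L(q)})\<close>, \<open>q \<in> {0..Q}\<^sup>n\<close>: the last coordinate is cut
  into \<open>N M\<close> pieces (only \<open>N\<close> if \<open>j0 = n\<close>), every other coordinate except the \<open>j0\<close>-th into \<open>M\<close>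
  pieces.\<close>

lemma box_principle_points:
  fixes n Q N M j0 :: nat and \<alpha> :: "nat \<Rightarrow> real"
  assumes "N \<ge> 1" "M \<ge> 1" "j0 \<le> n" "N * M ^ n < (Q + 1) ^ n"
  obtains q q' where "q \<in> PiE {..<n} (\<lambda>_. {0..int Q})" "q' \<in> PiE {..<n} (\<lambda>_. {0..int Q})" "q \<noteq> q'"
    "\<forall>j<n. j \<noteq> j0 \<longrightarrow> real M * \<bar>real_of_int (q j - q' j)\<bar> < real Q + 1"
    "real (if j0 = n then N else N * M) * \<bar>frac (L_form n \<alpha> q) - frac (L_form n \<alpha> q')\<bar> < 1"
proof -
  define D where "D = PiE {..<n} (\<lambda>_. {0..int Q})"
  define p where "p = (\<lambda>q j. if j < n then real_of_int (q j) / (real Q + 1) else frac (L_form n \<alpha> q))"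
  define K where "K = (\<lambda>j. if j < n then (if j = j0 then 1 else M) else if j0 = n then N else N * M)"
  have K_pos: "\<forall>j<Suc n. K j \<ge> 1" using assms(1,2) by (simp add: K_def)
  have K_prod: "(\<Prod>j<Suc n. K j) < card D"
  proof -
    have "(\<Prod>j<n. K j) = M ^ card ({..<n} - {j0})"
      by (simp add: K_def prod.If_cases flip: Diff_eq)
    then have "(\<Prod>j<Suc n. K j) = N * M ^ n"
      using assms(3) by (cases "j0 = n") (simp_all add: K_def card_Diff_singleton_if power_eq_if)
    then show ?thesis
      using assms(4) by (simp add: D_def card_PiE nat_add_distrib)
  qed
  have p_range: "\<forall>q\<in>D. \<forall>j<Suc n. 0 \<le> p q j \<and> p q j < 1"
  proof (intro ballI allI impI)
    fix q j assume "q \<in> D"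
    show "0 \<le> p q j \<and> p q j < 1"
    proof (cases "j < n")
      case True
      then have "0 \<le> q j" "q j \<le> int Q" using \<open>q \<in> D\<close> by (auto simp: D_def PiE_iff)
      then have "real_of_int (q j) < real Q + 1" by linarith
      with \<open>0 \<le> q j\<close> True show ?thesis by (simp add: p_def)
    qed (simp add: p_def frac_lt_1)
  qed
  obtain q q' where qq: "q \<in> D" "q' \<in> D" "q \<noteq> q'"
    and close: "\<forall>j<Suc n. real (K j) * \<bar>p q j - p q' j\<bar> < 1"
    using unit_cube_pigeonhole[OF _ p_range K_pos K_prod] by (auto simp: D_def finite_PiE)
  have "real M * \<bar>real_of_int (q j - q' j)\<bar> < real Q + 1" if "j < n" "j \<noteq> j0" for j
  proof -
    have "real M * (\<bar>real_of_int (q j - q' j)\<bar> / (real Q + 1)) < 1"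
      using close[rule_format, of j] that by (simp add: K_def p_def flip: diff_divide_distrib)
    then show ?thesis by (simp add: divide_less_eq add_pos_nonneg)
  qed
  moreover have "real (K n) * \<bar>p q n - p q' n\<bar> < 1" using close by simp
  ultimately show thesis
    using that qq unfolding D_def by (simp add: K_def p_def)
qed

lemma box_principle:
  fixes n Q N M j0 :: nat and \<alpha> :: "nat \<Rightarrow> real"
  assumes "N \<ge> 1" "M \<ge> 1" "j0 \<le> n" "N * M ^ n < (Q + 1) ^ n"
  obtains y :: "nat \<Rightarrow> int" where
    "\<exists>j<n. y j \<noteq> 0" "\<forall>j<n. \<bar>y j\<bar> \<le> int Q"
    "\<forall>j<n. j \<noteq> j0 \<longrightarrow> real M * \<bar>real_of_int (y j)\<bar> < real Q + 1"
    "real N * \<bar>xi n \<alpha> y\<bar> < 1"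
    "j0 \<noteq> n \<longrightarrow> real M * (real N * \<bar>xi n \<alpha> y\<bar>) < 1"
proof -
  obtain q q' where qq: "q \<in> PiE {..<n} (\<lambda>_. {0..int Q})" "q' \<in> PiE {..<n} (\<lambda>_. {0..int Q})" "q \<noteq> q'"
    and close: "\<forall>j<n. j \<noteq> j0 \<longrightarrow> real M * \<bar>real_of_int (q j - q' j)\<bar> < real Q + 1"
    and last: "real (if j0 = n then N else N * M) * \<bar>frac (L_form n \<alpha> q) - frac (L_form n \<alpha> q')\<bar> < 1"
    using box_principle_points[OF assms, of \<alpha>] by blast
  define y where "y = (\<lambda>j. if j < n then q j - q' j
                           else if j = n then \<lfloor>L_form n \<alpha> q'\<rfloor> - \<lfloor>L_form n \<alpha> q\<rfloor> else 0)"
  have "xi n \<alpha> y = frac (L_form n \<alpha> q) - frac (L_form n \<alpha> q')"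
    by (simp add: xi_def y_def frac_def L_form_def algebra_simps sum_subtractf)
  with last have last_y: "real (if j0 = n then N else N * M) * \<bar>xi n \<alpha> y\<bar> < 1"
    by simp
  show thesis
  proof
    show "\<exists>j<n. y j \<noteq> 0"
      using qq PiE_ext[of q "{..<n}" _ q'] unfolding y_def by fastforce
    show "\<forall>j<n. \<bar>y j\<bar> \<le> int Q"
      using qq(1,2) by (force simp: y_def PiE_iff)
    show "\<forall>j<n. j \<noteq> j0 \<longrightarrow> real M * \<bar>real_of_int (y j)\<bar> < real Q + 1"
      using close by (simp add: y_def)
    have "real N * \<bar>xi n \<alpha> y\<bar> \<le> real (if j0 = n then N else N * M) * \<bar>xi n \<alpha> y\<bar>"
      using assms(2) by (intro mult_right_mono) simp_all
    with last_y show "real N * \<bar>xi n \<alpha> y\<bar> < 1" by linarith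
    show "j0 \<noteq> n \<longrightarrow> real M * (real N * \<bar>xi n \<alpha> y\<bar>) < 1"
      using last_y by (auto simp: mult_ac)
  qed
qed

text \<open>Coordinates in which the box principle bounds the difference vector \<open>y\<close>: the functional
  \<open>y \<mapsto> a \<cdot> y\<close> becomes \<open>x \<mapsto> g \<cdot> x\<close> for the rescaled coefficients \<open>g\<close>.\<close>

definition rescaled_coords :: "nat \<Rightarrow> (nat \<Rightarrow> real) \<Rightarrow> real \<Rightarrow> real \<Rightarrow> (nat \<Rightarrow> int) \<Rightarrow> nat \<Rightarrow> real" where
  "rescaled_coords n \<alpha> s t y j = (if j < n then real_of_int (y j) / s else t * xi n \<alpha> y)"

definition rescaled_coeffs :: "nat \<Rightarrow> (nat \<Rightarrow> real) \<Rightarrow> real \<Rightarrow> real \<Rightarrow> (nat \<Rightarrow> real) \<Rightarrow> nat \<Rightarrow> real" where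
  "rescaled_coeffs n \<alpha> s t a j = (if j < n then (a j - a n * \<alpha> j) * s else a n / t)"

lemma sum_rescaled_coeffs_coords:
  assumes "s \<noteq> 0" "t \<noteq> 0"
  shows "(\<Sum>j<Suc n. rescaled_coeffs n \<alpha> s t a j * rescaled_coords n \<alpha> s t y j)
       = (\<Sum>j<Suc n. a j * of_int (y j))"
proof -
  have "(\<Sum>j<n. rescaled_coeffs n \<alpha> s t a j * rescaled_coords n \<alpha> s t y j)
      = (\<Sum>j<n. a j * of_int (y j)) - a n * L_form n \<alpha> y"
    using assms(1) by (simp add: rescaled_coeffs_def rescaled_coords_def L_form_def sum_distrib_left
        algebra_simps sum_subtractf)
  moreover have "rescaled_coeffs n \<alpha> s t a n * rescaled_coords n \<alpha> s t y n
      = a n * (L_form n \<alpha> y + of_int (y n))"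
    using assms(2) by (simp add: rescaled_coeffs_def rescaled_coords_def xi_eq_L_form_plus)
  ultimately show ?thesis by (simp add: algebra_simps)
qed

lemma rescaled_coeffs_nonzero:
  assumes "s \<noteq> 0" "t \<noteq> 0" "\<exists>j<Suc n. a j \<noteq> 0"
  shows "\<exists>j<Suc n. rescaled_coeffs n \<alpha> s t a j \<noteq> 0"
proof (rule ccontr)
  assume "\<not> ?thesis"
  then have g0: "\<forall>j<Suc n. rescaled_coeffs n \<alpha> s t a j = 0" by blast
  then have "a n = 0" using assms(2) by (auto simp: rescaled_coeffs_def dest: spec[of _ n])
  moreover have "a j = 0" if "j < n" for j
    using g0[rule_format, of j] that \<open>a n = 0\<close> assms(1) by (simp add: rescaled_coeffs_def)
  ultimately show False using assms(3) less_Suc_eq by auto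
qed

lemma rescaled_coords_le_of_box:
  assumes "s > 0" "M \<ge> 1" "t \<ge> 0" "\<forall>j<n. j \<noteq> j0 \<longrightarrow> real M * \<bar>real_of_int (y j)\<bar> < s"
    and "j0 \<noteq> n \<longrightarrow> real M * (t * \<bar>xi n \<alpha> y\<bar>) < 1"
  shows "\<forall>j<Suc n. j \<noteq> j0 \<longrightarrow> \<bar>rescaled_coords n \<alpha> s t y j\<bar> \<le> 1 / real M"
proof (intro allI impI)
  fix j assume j: "j < Suc n" "j \<noteq> j0"
  show "\<bar>rescaled_coords n \<alpha> s t y j\<bar> \<le> 1 / real M"
  proof (cases "j < n")
    case True
    then have "real M * \<bar>real_of_int (y j)\<bar> / s < 1" using assms(1,4) j(2) by simp
    then show ?thesis
      using True assms(1,2) by (simp add: rescaled_coords_def pos_le_divide_eq mult.commute)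
  next
    case False
    then have "j = n" using j(1) by simp
    then show ?thesis
      using assms(2,3,5) j(2) by (simp add: rescaled_coords_def abs_mult pos_le_divide_eq mult.commute)
  qed
qed

lemma badly_approximable_with_short_vector:
  assumes "badly_approximable_with n \<alpha> c" "c \<ge> 0" "\<exists>j<n. y j \<noteq> 0"
    and "s > 0" "M > 0" "N > 0" "s ^ n \<le> 2 * real M ^ n * real N"
    and short: "\<forall>j<Suc n. \<bar>rescaled_coords n \<alpha> s (real N) y j\<bar> \<le> real n / real M"
  shows "c * real M \<le> 2 * real n ^ (n + 1)"
proof -
  have "\<forall>j<n. real_of_int \<bar>y j\<bar> \<le> real n * s / real M"
  proof (intro allI impI)
    fix j assume "j < n"
    then have "\<bar>real_of_int (y j)\<bar> / s * s \<le> real n / real M * s"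
      using short[rule_format, of j] assms(4) by (intro mult_right_mono) (simp_all add: rescaled_coords_def)
    then show "real_of_int \<bar>y j\<bar> \<le> real n * s / real M"
      using assms(4) by simp
  qed
  then have "c / (real n * s / real M) ^ n \<le> \<bar>xi n \<alpha> y\<bar>"
    using badly_approximable_with_xi_ge[OF assms(1,2,3)] by blast
  then have base: "c * real M ^ n \<le> \<bar>xi n \<alpha> y\<bar> * (real n * s) ^ n"
    using assms(3-5) by (cases "n = 0") (simp_all add: field_simps)
  have "c * real M * (real M ^ n * real N)
      \<le> \<bar>xi n \<alpha> y\<bar> * (real n * s) ^ n * (real N * real M)"
    using mult_right_mono[OF base, of "real N * real M"] by (simp add: algebra_simps)
  also have "\<dots> = (real N * \<bar>xi n \<alpha> y\<bar>) * (real M * (real n * s) ^ n)"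
    by simp
  also have "\<dots> \<le> real n / real M * (real M * (real n * s) ^ n)"
    using short[rule_format, of n] assms(4) by (intro mult_right_mono) (simp_all add: rescaled_coords_def abs_mult)
  also have "\<dots> = real n ^ (n + 1) * s ^ n"
    using assms(5) by (simp add: power_mult_distrib)
  also have "\<dots> \<le> real n ^ (n + 1) * (2 * real M ^ n * real N)"
    using assms(7) by (intro mult_left_mono) simp_all
  finally have "c * real M * (real M ^ n * real N) \<le> 2 * real n ^ (n + 1) * (real M ^ n * real N)"
    by (simp add: algebra_simps)
  then show ?thesis
    using assms(5,6) by (simp add: mult_le_cancel_right_pos)
qed

lemma exists_small_xi_off_hyperplane:
  fixes n Q N M :: nat and a :: "nat \<Rightarrow> real"
  assumes "n \<ge> 1" "badly_approximable_with n \<alpha> c" "2 * real n ^ (n + 1) < c * real M"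
    and "N \<ge> 1" "N * M ^ n < (Q + 1) ^ n" "(Q + 1) ^ n \<le> 2 * M ^ n * N"
    and "\<exists>j<Suc n. a j \<noteq> 0"
  obtains y where "\<forall>j<n. \<bar>y j\<bar> \<le> int Q" "real N * \<bar>xi n \<alpha> y\<bar> < 1"
    "(\<Sum>j<Suc n. a j * of_int (y j)) \<noteq> 0"
proof -
  have "0 < c * real M" by (rule le_less_trans[OF _ assms(3)]) simp
  then have c: "c > 0" and M: "M \<ge> 1" by (simp_all add: zero_less_mult_iff)
  define s where "s = real Q + 1"
  have s: "s > 0" by (simp add: s_def)
  define g where "g = rescaled_coeffs n \<alpha> s (real N) a"
  obtain j0 where j0: "j0 < Suc n" "\<forall>j<Suc n. \<bar>g j\<bar> \<le> \<bar>g j0\<bar>"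
    using ex_is_arg_min_if_finite[of "{..<Suc n}" "\<lambda>j. - \<bar>g j\<bar>"] by (auto simp: is_arg_min_linorder)
  moreover have "\<exists>j<Suc n. g j \<noteq> 0"
    unfolding g_def using rescaled_coeffs_nonzero assms(4,7) s by simp
  ultimately have "g j0 \<noteq> 0" by force
  obtain y where y: "\<exists>j<n. y j \<noteq> 0" "\<forall>j<n. \<bar>y j\<bar> \<le> int Q"
    "\<forall>j<n. j \<noteq> j0 \<longrightarrow> real M * \<bar>real_of_int (y j)\<bar> < s"
    "real N * \<bar>xi n \<alpha> y\<bar> < 1" "j0 \<noteq> n \<longrightarrow> real M * (real N * \<bar>xi n \<alpha> y\<bar>) < 1"
    using box_principle[OF assms(4) M _ assms(5), of j0 \<alpha>] j0(1) unfolding s_def by auto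
  show thesis
  proof (rule that[OF y(2,4)], rule notI)
    assume "(\<Sum>j<Suc n. a j * of_int (y j)) = 0"
    define x where "x = rescaled_coords n \<alpha> s (real N) y"
    have cell: "\<forall>j<Suc n. j \<noteq> j0 \<longrightarrow> \<bar>x j\<bar> \<le> 1 / real M"
      unfolding x_def using y(3,5) s M by (intro rescaled_coords_le_of_box) auto
    have "\<bar>x j0\<bar> \<le> real (card {..<Suc n} - 1) * (1 / real M)"
      using j0 \<open>g j0 \<noteq> 0\<close> cell sum_rescaled_coeffs_coords[of s "real N" n \<alpha> a y] s assms(4)
        \<open>(\<Sum>j<Suc n. a j * of_int (y j)) = 0\<close>
      by (intro abs_le_of_max_coefficient) (auto simp: g_def x_def)
    then have "\<bar>x j0\<bar> \<le> real n / real M" by simp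
    moreover have "1 / real M \<le> real n / real M"
      using assms(1) by (simp add: divide_right_mono)
    ultimately have "\<forall>j<Suc n. \<bar>x j\<bar> \<le> real n / real M"
      using cell by (auto intro: order_trans)
    moreover have "s ^ n \<le> 2 * real M ^ n * real N"
    proof -
      have "real ((Q + 1) ^ n) \<le> real (2 * M ^ n * N)"
        using assms(6) by (simp only: of_nat_le_iff)
      then show ?thesis by (simp add: s_def add.commute)
    qed
    ultimately have "c * real M \<le> 2 * real n ^ (n + 1)"
      using c y(1) s M assms(4) unfolding x_def
      by (intro badly_approximable_with_short_vector[OF assms(2)]) auto
    with assms(3) show False by simp
  qed
qed

lemma unit_vector_off_hyperplane:
  fixes a :: "nat \<Rightarrow> real"
  assumes "\<exists>j<Suc n. a j \<noteq> 0"
  obtains u where "\<forall>j<Suc n. \<bar>u j\<bar> \<le> 1" "(\<Sum>j<Suc n. a j * of_int (u j)) \<noteq> 0"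
    "\<bar>xi n \<alpha> u\<bar> \<le> (\<Sum>j<n. \<bar>\<alpha> j\<bar>) + 1"
proof -
  obtain j where j: "j < Suc n" "a j \<noteq> 0" using assms by blast
  define u :: "nat \<Rightarrow> int" where "u = (\<lambda>i. if i = j then 1 else 0)"
  have unit: "(\<lambda>i. of_int (u i) * \<alpha> i) = (\<lambda>i. if i = j then \<alpha> j else 0)"
    by (auto simp: u_def)
  have "xi n \<alpha> u = (if j < n then \<alpha> j else 1)"
    using j(1) unfolding xi_def unit by (auto simp: u_def)
  moreover have "j < n \<Longrightarrow> \<bar>\<alpha> j\<bar> \<le> (\<Sum>j<n. \<bar>\<alpha> j\<bar>)"
    by (intro member_le_sum) auto
  ultimately have "\<bar>xi n \<alpha> u\<bar> \<le> (\<Sum>j<n. \<bar>\<alpha> j\<bar>) + 1"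
    by (auto simp: sum_nonneg)
  moreover have "(\<Sum>i<Suc n. a i * of_int (u i)) = a j"
    using j(1) by (simp add: u_def if_distrib cong: if_cong)
  ultimately show thesis
    using j(2) by (intro that[of u]) (auto simp: u_def)
qed

lemma abs_last_coord_less:
  assumes "\<forall>j<n. \<bar>y j\<bar> \<le> int Q" "\<bar>xi n \<alpha> y\<bar> < 1"
  shows "real_of_int \<bar>y n\<bar> < 1 + real Q * (\<Sum>j<n. \<bar>\<alpha> j\<bar>)"
proof -
  have "real_of_int (y n) = xi n \<alpha> y - L_form n \<alpha> y"
    by (simp add: xi_eq_L_form_plus)
  then show ?thesis
    using abs_L_form_le[OF assms(1), of \<alpha>] assms(2) by linarith
qed

lemma exists_nat_mult_le_less:
  assumes "A > 0" "x \<ge> 0"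
  obtains Q :: nat where "real Q * A \<le> x" "x < (real Q + 1) * A"
proof
  define Q where "Q = nat \<lfloor>x / A\<rfloor>"
  have "real Q = of_int \<lfloor>x / A\<rfloor>" using assms by (simp add: Q_def)
  then have "real Q \<le> x / A" "x / A < real Q + 1"
    using floor_correct[of "x / A"] by linarith+
  then show "real Q * A \<le> x" "x < (real Q + 1) * A"
    using assms(1) by (simp_all add: field_simps)
qed

lemma exists_multiplier_between:
  fixes K P :: nat
  assumes "K \<ge> 1" "2 * K \<le> P"
  obtains N where "N \<ge> 1" "N * K < P" "P \<le> 2 * K * N"
proof
  define N where "N = (P - 1) div K"
  have "N * K \<le> P - 1" unfolding N_def by (rule div_times_less_eq_dividend)
  then show "N * K < P" using assms by linarith
  have "K div K \<le> (P - 1) div K"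
    using assms by (intro div_le_mono) linarith
  then show "N \<ge> 1" using assms(1) by (simp add: N_def)
  have "P - 1 < N * K + K"
    using div_mult_mod_eq[of "P - 1" K] mod_less_divisor[of K "P - 1"] assms(1)
    unfolding N_def by linarith
  moreover have "K \<le> N * K" using \<open>N \<ge> 1\<close> by simp
  moreover have "2 * K * N = N * K + N * K" by simp
  ultimately show "P \<le> 2 * K * N" by linarith
qed

lemma exists_small_xi_off_hyperplane_of_height:
  fixes n Q M m :: nat and a :: "nat \<Rightarrow> real"
  assumes "badly_approximable_with n \<alpha> c" "2 * real n ^ (n + 1) < c * real M"
    and A: "A = (\<Sum>j<n. \<bar>\<alpha> j\<bar>) + 1" and Q: "real Q * A \<le> real m" "real m < (real Q + 1) * A"
    and "2 * M ^ n \<le> (Q + 1) ^ n" "\<exists>j<Suc n. a j \<noteq> 0"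
  obtains u where "\<forall>j<Suc n. \<bar>u j\<bar> \<le> int m" "(\<Sum>j<Suc n. a j * of_int (u j)) \<noteq> 0"
    "\<bar>xi n \<alpha> u\<bar> * real m ^ n < 2 * (A * real M) ^ n"
proof -
  have "n \<noteq> 0" using assms(6) by (rule contrapos_pn) simp
  have "M \<noteq> 0" using assms(2) by (rule contrapos_pn) (simp add: not_less)
  have "M ^ n \<ge> 1" using \<open>M \<noteq> 0\<close> by (simp add: Suc_le_eq)
  then have "Q \<noteq> 0" using assms(6) by (intro notI) simp
  obtain N where N: "N \<ge> 1" "N * M ^ n < (Q + 1) ^ n" "(Q + 1) ^ n \<le> 2 * M ^ n * N"
    using exists_multiplier_between[OF \<open>M ^ n \<ge> 1\<close> assms(6)] by blast
  obtain y where y: "\<forall>j<n. \<bar>y j\<bar> \<le> int Q" "real N * \<bar>xi n \<alpha> y\<bar> < 1"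
    "(\<Sum>j<Suc n. a j * of_int (y j)) \<noteq> 0"
    using exists_small_xi_off_hyperplane[OF _ assms(1,2) N assms(7)] \<open>n \<noteq> 0\<close> by auto
  have A1: "A \<ge> 1" using A by (simp add: sum_nonneg)
  have "real Q * 1 \<le> real Q * A" using A1 by (intro mult_left_mono) simp_all
  with Q(1) have "int Q \<le> int m" by simp
  have "1 * \<bar>xi n \<alpha> y\<bar> \<le> real N * \<bar>xi n \<alpha> y\<bar>" using N(1) by (intro mult_right_mono) simp_all
  with y(2) have "real_of_int \<bar>y n\<bar> < 1 + real Q * (A - 1)"
    using abs_last_coord_less[OF y(1)] A by simp
  with Q(1) \<open>Q \<noteq> 0\<close> have "\<bar>y n\<bar> \<le> int m" by (simp add: algebra_simps)
  with \<open>int Q \<le> int m\<close> have height: "\<forall>j<Suc n. \<bar>y j\<bar> \<le> int m"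
    using y(1) by (metis less_Suc_eq order_trans)
  have "(real Q + 1) ^ n \<le> 2 * real M ^ n * real N"
  proof -
    have "real ((Q + 1) ^ n) \<le> real (2 * M ^ n * N)" using N(3) by (simp only: of_nat_le_iff)
    then show ?thesis by (simp add: add.commute)
  qed
  then have "((real Q + 1) * A) ^ n \<le> 2 * real M ^ n * real N * A ^ n"
    using A1 by (simp add: power_mult_distrib mult_right_mono)
  moreover have "real m ^ n \<le> ((real Q + 1) * A) ^ n"
    using Q(2) by (intro power_mono) simp_all
  ultimately have "\<bar>xi n \<alpha> y\<bar> * real m ^ n \<le> \<bar>xi n \<alpha> y\<bar> * (2 * real M ^ n * real N * A ^ n)"
    by (intro mult_left_mono) simp_all
  also have "\<dots> = (real N * \<bar>xi n \<alpha> y\<bar>) * (2 * (A * real M) ^ n)"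
    by (simp add: power_mult_distrib mult_ac)
  also have "\<dots> < 2 * (A * real M) ^ n"
    using y(2) A1 \<open>M \<noteq> 0\<close> by simp
  finally show thesis using that height y(3) by blast
qed

lemma power_mult_less_of_small_height:
  assumes "A \<ge> 1" "real m < (real Q + 1) * A" "(Q + 1) ^ n < 2 * M ^ n"
  shows "A * real m ^ n < 2 * A ^ (n + 1) * real M ^ n"
proof -
  have "real m ^ n \<le> ((real Q + 1) * A) ^ n"
    using assms(2) by (intro power_mono) simp_all
  also have "\<dots> < 2 * real M ^ n * A ^ n"
  proof -
    have "real ((Q + 1) ^ n) < real (2 * M ^ n)" using assms(3) by (simp only: of_nat_less_iff)
    then show ?thesis using assms(1) by (simp add: power_mult_distrib add.commute)
  qed
  finally show ?thesis using assms(1) by (simp add: mult_ac)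
qed

definition xi_small_off_hyperplanes :: "nat \<Rightarrow> (nat \<Rightarrow> real) \<Rightarrow> nat \<Rightarrow> real \<Rightarrow> bool" where
  "xi_small_off_hyperplanes n \<alpha> m B \<longleftrightarrow>
     (\<forall>a :: nat \<Rightarrow> real. (\<exists>j<Suc n. a j \<noteq> 0) \<longrightarrow>
        (\<exists>u. (\<forall>j<Suc n. \<bar>u j\<bar> \<le> int m) \<and> (\<Sum>j<Suc n. a j * of_int (u j)) \<noteq> 0 \<and> \<bar>xi n \<alpha> u\<bar> < B))"

lemma badly_approximable_with_xi_small_off_hyperplanes:
  assumes "badly_approximable_with n \<alpha> c" "c > 0"
  obtains C where "C > 0" "\<And>m. m \<ge> 1 \<Longrightarrow> xi_small_off_hyperplanes n \<alpha> m (C * real m powr (- real n))"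
proof -
  define A where "A = (\<Sum>j<n. \<bar>\<alpha> j\<bar>) + 1"
  have A1: "A \<ge> 1" by (simp add: A_def sum_nonneg)
  obtain M :: nat where "2 * real n ^ (n + 1) / c < real M"
    using reals_Archimedean2 by blast
  then have M: "2 * real n ^ (n + 1) < c * real M"
    using assms(2) by (simp add: field_simps)
  then have "M \<noteq> 0" by (rule contrapos_pn) (simp add: not_less)
  define C where "C = 2 * A ^ (n + 1) * real M ^ n"
  have "C > 0" using A1 \<open>M \<noteq> 0\<close> by (simp add: C_def)
  moreover have "xi_small_off_hyperplanes n \<alpha> m (C * real m powr (- real n))" if m: "m \<ge> 1" for m
    unfolding xi_small_off_hyperplanes_def less_mult_powr_neg_iff[OF m]
  proof (intro allI impI)
    fix a :: "nat \<Rightarrow> real" assume a: "\<exists>j<Suc n. a j \<noteq> 0"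
    obtain Q where Q: "real Q * A \<le> real m" "real m < (real Q + 1) * A"
      using exists_nat_mult_le_less[of A "real m"] A1 by auto
    show "\<exists>u. (\<forall>j<Suc n. \<bar>u j\<bar> \<le> int m) \<and> (\<Sum>j<Suc n. a j * of_int (u j)) \<noteq> 0 \<and>
           \<bar>xi n \<alpha> u\<bar> * real m ^ n < C"
    proof (cases "2 * M ^ n \<le> (Q + 1) ^ n")
      case True
      then obtain u where u: "\<forall>j<Suc n. \<bar>u j\<bar> \<le> int m" "(\<Sum>j<Suc n. a j * of_int (u j)) \<noteq> 0"
        "\<bar>xi n \<alpha> u\<bar> * real m ^ n < 2 * (A * real M) ^ n"
        using exists_small_xi_off_hyperplane_of_height[OF assms(1) M A_def Q _ a] by blast
      have "1 * (2 * (A * real M) ^ n) \<le> A * (2 * (A * real M) ^ n)"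
        using A1 by (intro mult_right_mono) simp_all
      then have "2 * (A * real M) ^ n \<le> C"
        by (simp add: C_def power_mult_distrib mult_ac)
      with u show ?thesis by force
    next
      case False
      \<comment> \<open>for small heights the constant \<open>C\<close> absorbs the trivial bound \<open>\<bar>\<xi>(u)\<bar> \<le> A\<close>\<close>
      obtain u where u: "\<forall>j<Suc n. \<bar>u j\<bar> \<le> 1" "(\<Sum>j<Suc n. a j * of_int (u j)) \<noteq> 0"
        "\<bar>xi n \<alpha> u\<bar> \<le> A"
        using unit_vector_off_hyperplane[OF a] unfolding A_def by blast
      have "\<bar>xi n \<alpha> u\<bar> * real m ^ n \<le> A * real m ^ n"
        using u(3) by (intro mult_right_mono) simp_all
      also have "\<dots> < C"
        using power_mult_less_of_small_height[OF A1 Q(2)] False by (simp add: C_def not_le)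
      finally have "\<bar>xi n \<alpha> u\<bar> * real m ^ n < C" .
      moreover have "\<forall>j<Suc n. \<bar>u j\<bar> \<le> int m" using u(1) m by force
      ultimately show ?thesis using u(2) by blast
    qed
  qed
  ultimately show thesis using that by blast
qed

section \<open>Minkowski's algorithm\<close>

lemma minkowski_rows_bounded:
  "minkowski_rows n \<alpha> m w \<Longrightarrow> i \<le> n \<Longrightarrow> \<forall>j<Suc n. \<bar>w i j\<bar> \<le> int m"
  unfolding minkowski_rows_def by (meson le_imp_less_Suc)

lemma minkowski_rows_nonzero:
  "minkowski_rows n \<alpha> m w \<Longrightarrow> i \<le> n \<Longrightarrow> \<exists>j<Suc n. w i j \<noteq> 0"
  unfolding minkowski_rows_def by (metis le_imp_less_Suc less_irrefl)

lemma minkowski_rows_indep: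
  assumes "minkowski_rows n \<alpha> m w" "i \<le> Suc n"
  shows "int_vecs_indep (Suc n) i w"
proof (cases i)
  case (Suc i')
  then show ?thesis using assms unfolding minkowski_rows_def by (meson Suc_le_mono le_imp_less_Suc)
qed (simp add: int_vecs_indep_def)

lemma minkowski_rows_minimal:
  assumes "minkowski_rows n \<alpha> m w" "i \<le> n"
    and "\<forall>j<Suc n. \<bar>u j\<bar> \<le> int m" "int_vecs_indep (Suc n) (Suc i) (w(i := u))"
  shows "\<bar>xi n \<alpha> (w i)\<bar> \<le> \<bar>xi n \<alpha> u\<bar>"
  using assms unfolding minkowski_rows_def by (meson le_imp_less_Suc)

lemma minkowski_rows_strict_mono:
  assumes indep: "Q_lin_indep_with_1 n \<alpha>" and rows: "minkowski_rows n \<alpha> m w" and "i < n"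
  shows "\<bar>xi n \<alpha> (w i)\<bar> < \<bar>xi n \<alpha> (w (Suc i))\<bar>"
proof -
  have indep_next: "int_vecs_indep (Suc n) (Suc (Suc i)) w"
    using minkowski_rows_indep[OF rows, of "Suc (Suc i)"] \<open>i < n\<close> by simp
  have "\<bar>xi n \<alpha> (w i)\<bar> \<le> \<bar>xi n \<alpha> (w (Suc i))\<bar>"
  proof (rule minkowski_rows_minimal[OF rows])
    show "\<forall>j<Suc n. \<bar>w (Suc i) j\<bar> \<le> int m"
      using minkowski_rows_bounded[OF rows, of "Suc i"] \<open>i < n\<close> by simp
    show "int_vecs_indep (Suc n) (Suc i) (w(i := w (Suc i)))"
      using int_vecs_indep_replace_by_next[OF indep_next] .
  qed (use \<open>i < n\<close> in simp)
  moreover have "\<bar>xi n \<alpha> (w i)\<bar> \<noteq> \<bar>xi n \<alpha> (w (Suc i))\<bar>"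
  proof
    assume "\<bar>xi n \<alpha> (w i)\<bar> = \<bar>xi n \<alpha> (w (Suc i))\<bar>"
    then consider "xi n \<alpha> (w i) = xi n \<alpha> (w (Suc i))" | "xi n \<alpha> (w i) = - xi n \<alpha> (w (Suc i))"
      by linarith
    then obtain k :: int where "xi n \<alpha> (w i) = of_int k * xi n \<alpha> (w (Suc i))"
      by cases (use that[of 1] that[of "-1"] in simp_all)
    then have "xi n \<alpha> (\<lambda>j. w i j - k * w (Suc i) j) = 0"
      by (simp only: xi_diff_scaled diff_self)
    then have "\<forall>j<Suc n. w i j = k * w (Suc i) j"
      using Q_lin_indep_xi_eq_0D[OF indep] less_Suc_eq_le by fastforce
    then show False
      using int_vecs_indep_not_proportional[OF indep_next, of i "Suc i"] by simp
  qed
  ultimately show ?thesis by simp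
qed

lemma minkowski_rows_last_less:
  assumes rows: "minkowski_rows n \<alpha> m w" and "xi_small_off_hyperplanes n \<alpha> m B"
  shows "\<bar>xi n \<alpha> (w n)\<bar> < B"
proof -
  obtain a :: "nat \<Rightarrow> real" where a: "\<exists>j<Suc n. a j \<noteq> 0"
    "\<forall>i\<in>{..<n}. (\<Sum>j<Suc n. a j * of_int (w i j)) = 0"
    using exists_nonzero_orthogonal[of "{..<n}" "Suc n" "\<lambda>i j. of_int (w i j)"] by auto
  then obtain u where u: "\<forall>j<Suc n. \<bar>u j\<bar> \<le> int m" "(\<Sum>j<Suc n. a j * of_int (u j)) \<noteq> 0"
    "\<bar>xi n \<alpha> u\<bar> < B"
    using assms(2) unfolding xi_small_off_hyperplanes_def by blast
  have "int_vecs_indep (Suc n) (Suc n) (w(n := u))"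
    using int_vecs_indep_extend[OF minkowski_rows_indep[OF rows] _ u(2)] a(2) by simp
  then have "\<bar>xi n \<alpha> (w n)\<bar> \<le> \<bar>xi n \<alpha> u\<bar>"
    using minkowski_rows_minimal[OF rows _ u(1)] by simp
  with u(3) show ?thesis by linarith
qed

theorem lemma5p3:
  fixes n :: nat and \<alpha> :: "nat \<Rightarrow> real"
  assumes "Q_lin_indep_with_1 n \<alpha>"
    and "badly_approximable n \<alpha>"
  shows "\<exists>c C. c > 0 \<and> C > 0 \<and>
    (\<forall>m :: nat. m \<ge> 1 \<longrightarrow> (\<forall>w. minkowski_rows n \<alpha> m w \<longrightarrow>
       c * real m powr (- real n) < \<bar>xi n \<alpha> (w 0)\<bar> \<and>
       (\<forall>i < n. \<bar>xi n \<alpha> (w i)\<bar> < \<bar>xi n \<alpha> (w (Suc i))\<bar>) \<and>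
       \<bar>xi n \<alpha> (w n)\<bar> < C * real m powr (- real n)))"
proof -
  obtain c where c: "c > 0" "badly_approximable_with n \<alpha> c"
    using assms(2) badly_approximable_iff by blast
  obtain C where C: "C > 0"
    "\<And>m. m \<ge> 1 \<Longrightarrow> xi_small_off_hyperplanes n \<alpha> m (C * real m powr (- real n))"
    using badly_approximable_with_xi_small_off_hyperplanes[OF c(2,1)] by blast
  have "min c 1 / 2 * real m powr (- real n) < \<bar>xi n \<alpha> (w 0)\<bar> \<and>
       (\<forall>i < n. \<bar>xi n \<alpha> (w i)\<bar> < \<bar>xi n \<alpha> (w (Suc i))\<bar>) \<and>
       \<bar>xi n \<alpha> (w n)\<bar> < C * real m powr (- real n)"
    if m: "m \<ge> 1" and rows: "minkowski_rows n \<alpha> m w" for m w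
    using badly_approximable_with_xi_lower_bound[OF c(2,1) m]
      minkowski_rows_nonzero[OF rows] minkowski_rows_bounded[OF rows]
      minkowski_rows_strict_mono[OF assms(1) rows] minkowski_rows_last_less[OF rows C(2)[OF m]]
    by simp
  then show ?thesis
    using c(1) C(1) by (intro exI[of _ "min c 1 / 2"] exI[of _ C]) simp
qed

end
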